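(* Let $\psi:\mathbb{C}\to\mathbb{R}$ be a $C^2$ function with $m\le\Delta\psi\le M$ for constants $m,M>0$. For any two $\ell$-tuples $\mathfrak{p}=(p_1,\dots,p_\ell),\mathfrak{q}=(q_1,\dots,q_\ell)\in\mathbb{C}^\ell$, each of distinct points, $$\mathscr{F}_\psi(\mathfrak{p})=\frac{(z-p_1)\cdots(z-p_\ell)}{(z-q_1)\cdots(z-q_\ell)}\cdot\mathscr{F}_\psi(\mathfrak{q}).$$
   Context: $\mathscr{F}_\psi=L^2(\mathbb{C},e^{-2\psi}d\lambda)\cap\mathscr{O}(\mathbb{C})$ (holomorphic functions on $\mathbb{C}$ square integrable with respect to $e^{-2\psi}d\lambda$, $\lambda$ Lebesgue measure), and for a tuple $\mathfrak{p}$ of distinct points $\mathscr{F}_\psi(\mathfrak{p})=\{\varphi\in\mathscr{F}_\psi:\varphi(p_1)=\dots=\varphi(p_\ell)=0\}$. The right-hand side denotes the set of functions $z\mapsto\frac{(z-p_1)\cdots(z-p_\ell)}{(z-q_1)\cdots(z-q_\ell)}\varphi(z)$, $\varphi\in\mathscr{F}_\psi(\mathfrak{q})$ (with removable singularities filled in). *)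

theory Defs
  imports "HOL-Analysis.Analysis"
begin

definition partial_x :: "(complex \<Rightarrow> real) \<Rightarrow> complex \<Rightarrow> real" where
  "partial_x f z = deriv (\<lambda>t::real. f (z + complex_of_real t)) 0"

definition partial_y :: "(complex \<Rightarrow> real) \<Rightarrow> complex \<Rightarrow> real" where
  "partial_y f z = deriv (\<lambda>t::real. f (z + \<i> * complex_of_real t)) 0"

definition laplacian :: "(complex \<Rightarrow> real) \<Rightarrow> complex \<Rightarrow> real" where
  "laplacian f z = partial_x (partial_x f) z + partial_y (partial_y f) z"

definition C2_function :: "(complex \<Rightarrow> real) \<Rightarrow> bool" where
  "C2_function f \<longleftrightarrow>
     (\<exists>(D1 :: complex \<Rightarrow> complex \<Rightarrow>\<^sub>L real) (D2 :: complex \<Rightarrow> complex \<Rightarrow>\<^sub>L (complex \<Rightarrow>\<^sub>L real)).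
        (\<forall>z. (f has_derivative blinfun_apply (D1 z)) (at z)) \<and>
        (\<forall>z. (D1 has_derivative blinfun_apply (D2 z)) (at z)) \<and>
        continuous_on UNIV D2)"

definition fock_space :: "(complex \<Rightarrow> real) \<Rightarrow> (complex \<Rightarrow> complex) set" where
  "fock_space \<psi> = {f. f holomorphic_on UNIV \<and>
      integrable lborel (\<lambda>z. (norm (f z))\<^sup>2 * exp (- 2 * \<psi> z))}"

definition fock_vanishing :: "(complex \<Rightarrow> real) \<Rightarrow> complex list \<Rightarrow> (complex \<Rightarrow> complex) set" where
  "fock_vanishing \<psi> ps = {f \<in> fock_space \<psi>. \<forall>p \<in> set ps. f p = 0}"

text \<open>The set of functions \<open>z \<mapsto> \<Prod>(z-p_i)/\<Prod>(z-q_i) \<phi>(z)\<close>, \<open>\<phi> \<in> F_\<psi>(q)\<close>, with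
  removable singularities filled in: entire functions agreeing with that quotient
  off the points \<open>q_i\<close>.\<close>
definition ratio_multiple ::
  "complex list \<Rightarrow> complex list \<Rightarrow> (complex \<Rightarrow> complex) set \<Rightarrow> (complex \<Rightarrow> complex) set" where
  "ratio_multiple ps qs S = {g. g holomorphic_on UNIV \<and>
      (\<exists>\<phi>\<in>S. \<forall>z. z \<notin> set qs \<longrightarrow>
          g z = (\<Prod>i<length ps. z - ps ! i) / (\<Prod>i<length qs. z - qs ! i) * \<phi> z)}"

end

theory Submission
  imports Defs "HOL-Complex_Analysis.Complex_Analysis"
begin

text \<open>An entire function vanishing at the distinct points \<open>p\<^sub>1, \<dots>, p\<^sub>\<ell>\<close> is exactly
  \<open>(z - p\<^sub>1)\<cdots>(z - p\<^sub>\<ell>) k(z)\<close> with \<open>k\<close> entire. Since two monic polynomials of the same degree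
  have comparable moduli near infinity and the weight \<open>e\<^sup>-\<^sup>2\<^sup>\<psi>\<close> is continuous, hence
  locally integrable, \<open>P k\<close> is square integrable iff \<open>Q k\<close> is, for \<open>P\<close>, \<open>Q\<close> the two root
  polynomials. Both sides of the identity are therefore the same set of functions \<open>P k\<close>.\<close>

definition root_poly :: "complex list \<Rightarrow> complex \<Rightarrow> complex" where
  "root_poly ps z = (\<Prod>i<length ps. z - ps ! i)"

lemma root_poly_Nil [simp]: "root_poly [] z = 1"
  by (simp add: root_poly_def)

lemma root_poly_Cons [simp]: "root_poly (p # ps) z = (z - p) * root_poly ps z"
  unfolding root_poly_def by (simp only: length_Cons prod.lessThan_Suc_shift nth_Cons_0 nth_Cons_Suc)

lemma holomorphic_root_poly [holomorphic_intros]: "root_poly ps holomorphic_on A"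
  unfolding root_poly_def by (intro holomorphic_intros)

lemma continuous_on_root_poly [continuous_intros]: "continuous_on A (root_poly ps)"
  using holomorphic_root_poly holomorphic_on_imp_continuous_on by blast

lemma root_poly_eq_0_iff: "root_poly ps z = 0 \<longleftrightarrow> z \<in> set ps"
  by (induction ps) auto

lemma entire_vanishing_imp_root_poly_factor:
  assumes "distinct ps" "h holomorphic_on UNIV" "\<forall>p\<in>set ps. h p = 0"
  obtains k where "k holomorphic_on UNIV" "\<And>z. h z = root_poly ps z * k z"
  using assms
proof (induction ps arbitrary: h thesis)
  case Nil
  then show ?case by simp
next
  case (Cons p ps)
  define h' where "h' = (\<lambda>z. if z = p then deriv h p else (h z - h p) / (z - p))"
  have "h' holomorphic_on UNIV"
    unfolding h'_def by (rule pole_lemma) (use Cons.prems in auto)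
  moreover have "\<forall>q\<in>set ps. h' q = 0"
    using Cons.prems by (auto simp: h'_def)
  ultimately obtain k where k: "k holomorphic_on UNIV" "\<And>z. h' z = root_poly ps z * k z"
    using Cons.IH Cons.prems by (metis distinct.simps(2))
  have "h z = (z - p) * h' z" for z
    using Cons.prems by (auto simp: h'_def)
  with k show ?case
    using Cons.prems(1) by (simp add: mult.assoc)
qed

text \<open>Outside the disc of radius \<open>2A\<close>, \<open>A\<close> bounding all roots, \<open>|z - q| \<le> |z| + A \<le> 3(|z| - A) \<le> 3|z - p|\<close>.\<close>
lemma root_poly_bounded_at_infinity:
  assumes "length ps = length qs"
  obtains R C where "\<And>z. R \<le> norm z \<Longrightarrow> norm (root_poly qs z) \<le> C * norm (root_poly ps z)"
proof
  define A where "A = Max (insert 0 (norm ` set (ps @ qs)))"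
  have root_le_A: "norm x \<le> A" if "x \<in> set (ps @ qs)" for x
    unfolding A_def using that by (intro Max_ge) auto
  have "0 \<le> A"
    unfolding A_def by (intro Max_ge) auto
  fix z :: complex assume z: "2 * A \<le> norm z"
  have "(\<Prod>i<length qs. norm (z - qs ! i)) \<le> (\<Prod>i<length qs. 3 * norm (z - ps ! i))"
  proof (rule prod_mono)
    fix i assume "i \<in> {..<length qs}"
    then have "norm (qs ! i) \<le> A" "norm (ps ! i) \<le> A"
      using assms by (auto intro!: root_le_A)
    then have "norm (z - qs ! i) \<le> norm z + A" "norm z - A \<le> norm (z - ps ! i)"
      using norm_triangle_ineq4[of z "qs ! i"] norm_triangle_ineq2[of z "ps ! i"] by linarith+
    then show "0 \<le> norm (z - qs ! i) \<and> norm (z - qs ! i) \<le> 3 * norm (z - ps ! i)"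
      using z \<open>0 \<le> A\<close> by auto
  qed
  then show "norm (root_poly qs z) \<le> 3 ^ length qs * norm (root_poly ps z)"
    unfolding root_poly_def using assms by (simp add: prod_norm prod.distrib)
qed

lemma integrable_if_dominated_off_ball:
  fixes F G :: "'a::euclidean_space \<Rightarrow> real"
  assumes "continuous_on UNIV G" "integrable lborel F"
    and "\<And>z. R \<le> norm z \<Longrightarrow> norm (G z) \<le> norm (F z)"
  shows "integrable lborel G"
proof (rule Bochner_Integration.integrable_bound)
  show "integrable lborel (\<lambda>z. indicator (cball 0 R) z * norm (G z) + norm (F z))"
    using assms(1,2)
    by (intro Bochner_Integration.integrable_add integrable_norm
        borel_integrable_compact[where f = "\<lambda>z. norm (G z)", unfolded real_scaleR_def])
      (auto intro: continuous_on_subset continuous_intros)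
  show "G \<in> borel_measurable lborel"
    using borel_measurable_continuous_onI[OF assms(1)] by simp
  show "AE z in lborel. norm (G z) \<le> norm (indicator (cball 0 R) z * norm (G z) + norm (F z))"
    using assms(3) by (intro AE_I2) (fastforce simp: indicator_def)
qed

lemma root_poly_mult_mem_fock_space:
  assumes "continuous_on UNIV \<psi>" "length ps = length qs" "k holomorphic_on UNIV"
    and "(\<lambda>z. root_poly ps z * k z) \<in> fock_space \<psi>"
  shows "(\<lambda>z. root_poly qs z * k z) \<in> fock_space \<psi>"
proof -
  obtain R C where RC: "\<And>z. R \<le> norm z \<Longrightarrow> norm (root_poly qs z) \<le> C * norm (root_poly ps z)"
    using root_poly_bounded_at_infinity[OF assms(2)] by blast
  have "continuous_on UNIV k"
    using assms(3) holomorphic_on_imp_continuous_on by blast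
  then have cont: "continuous_on UNIV (\<lambda>z. (norm (root_poly qs z * k z))\<^sup>2 * exp (- 2 * \<psi> z))"
    by (intro continuous_intros assms(1))
  have int: "integrable lborel (\<lambda>z. (norm (root_poly ps z * k z))\<^sup>2 * exp (- 2 * \<psi> z))"
    using assms(4) by (simp add: fock_space_def)
  have dom: "norm ((norm (root_poly qs z * k z))\<^sup>2 * exp (- 2 * \<psi> z))
      \<le> norm (C\<^sup>2 * ((norm (root_poly ps z * k z))\<^sup>2 * exp (- 2 * \<psi> z)))" if "R \<le> norm z" for z
  proof -
    have "norm (root_poly qs z * k z) \<le> C * norm (root_poly ps z * k z)"
      using mult_right_mono[OF RC[OF that] norm_ge_zero] by (simp add: norm_mult mult.assoc)
    then have "(norm (root_poly qs z * k z))\<^sup>2 \<le> (C * norm (root_poly ps z * k z))\<^sup>2"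
      by (rule power_mono) simp
    then show ?thesis
      by (simp add: power_mult_distrib mult.assoc[symmetric])
  qed
  have "integrable lborel (\<lambda>z. (norm (root_poly qs z * k z))\<^sup>2 * exp (- 2 * \<psi> z))"
    using integrable_if_dominated_off_ball[OF cont integrable_mult_right[OF int] dom] .
  then show ?thesis
    unfolding fock_space_def by (auto intro!: holomorphic_intros assms(3))
qed

lemma fock_vanishing_eq_root_poly_multiples:
  assumes "distinct ps"
  shows "fock_vanishing \<psi> ps = (\<lambda>k z. root_poly ps z * k z) `
           {k. k holomorphic_on UNIV \<and> (\<lambda>z. root_poly ps z * k z) \<in> fock_space \<psi>}"
proof (intro equalityI subsetI)
  fix h assume h: "h \<in> fock_vanishing \<psi> ps"
  then obtain k where k: "k holomorphic_on UNIV" "\<And>z. h z = root_poly ps z * k z"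
    using entire_vanishing_imp_root_poly_factor[OF assms]
    unfolding fock_vanishing_def fock_space_def by blast
  then have "h = (\<lambda>z. root_poly ps z * k z)"
    by (intro ext)
  with h k(1) show "h \<in> (\<lambda>k z. root_poly ps z * k z) `
      {k. k holomorphic_on UNIV \<and> (\<lambda>z. root_poly ps z * k z) \<in> fock_space \<psi>}"
    unfolding fock_vanishing_def by (auto intro!: image_eqI[of _ _ k])
qed (auto simp: fock_vanishing_def root_poly_eq_0_iff)

lemma continuous_eq_off_finite:
  fixes f g :: "'a::{perfect_space,t2_space} \<Rightarrow> 'b::t2_space"
  assumes "isCont f z" "isCont g z" "finite S" "\<And>w. w \<notin> S \<Longrightarrow> f w = g w"
  shows "f z = g z"
proof -
  have "eventually (\<lambda>w. w \<notin> S) (at z)"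
    using assms(3) islimpt_finite islimpt_iff_eventually by blast
  then have "eventually (\<lambda>w. g w = f w) (at z)"
    by eventually_elim (use assms(4) in auto)
  then have "(g \<longlongrightarrow> f z) (at z)"
    using assms(1) tendsto_cong unfolding isCont_def by blast
  then show ?thesis
    using assms(2) tendsto_unique[OF at_neq_bot] unfolding isCont_def by blast
qed

lemma ratio_multiple_root_poly_multiples:
  assumes "\<And>k. k \<in> K \<Longrightarrow> k holomorphic_on UNIV"
  shows "ratio_multiple ps qs ((\<lambda>k z. root_poly qs z * k z) ` K) = (\<lambda>k z. root_poly ps z * k z) ` K"
proof (intro equalityI subsetI)
  fix g assume "g \<in> ratio_multiple ps qs ((\<lambda>k z. root_poly qs z * k z) ` K)"
  then obtain k where g: "g holomorphic_on UNIV" and "k \<in> K"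
    and g_off: "\<And>z. z \<notin> set qs \<Longrightarrow> g z = root_poly ps z / root_poly qs z * (root_poly qs z * k z)"
    unfolding ratio_multiple_def root_poly_def[symmetric] by blast
  have "g z = root_poly ps z * k z" for z
  proof (rule continuous_eq_off_finite[where g = "\<lambda>z. root_poly ps z * k z" and S = "set qs"])
    have "(\<lambda>z. root_poly ps z * k z) holomorphic_on UNIV"
      using assms[OF \<open>k \<in> K\<close>] by (intro holomorphic_intros)
    with g show "isCont g z" "isCont (\<lambda>z. root_poly ps z * k z) z"
      by (auto intro!: field_differentiable_imp_continuous_at holomorphic_on_imp_differentiable_at)
    show "g w = root_poly ps w * k w" if "w \<notin> set qs" for w
      using g_off[OF that] that by (simp add: root_poly_eq_0_iff)
  qed simp
  with \<open>k \<in> K\<close> show "g \<in> (\<lambda>k z. root_poly ps z * k z) ` K"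
    by (auto intro!: image_eqI[of _ _ k])
next
  fix g assume "g \<in> (\<lambda>k z. root_poly ps z * k z) ` K"
  then obtain k where k: "k \<in> K" and g: "g = (\<lambda>z. root_poly ps z * k z)"
    by blast
  have "g holomorphic_on UNIV"
    unfolding g using assms[OF k] by (intro holomorphic_intros)
  moreover have "(\<lambda>z. root_poly qs z * k z) \<in> (\<lambda>k z. root_poly qs z * k z) ` K"
    using k by blast
  moreover have "\<forall>z. z \<notin> set qs \<longrightarrow> g z = root_poly ps z / root_poly qs z * (root_poly qs z * k z)"
    unfolding g by (simp add: root_poly_eq_0_iff)
  ultimately show "g \<in> ratio_multiple ps qs ((\<lambda>k z. root_poly qs z * k z) ` K)"
    unfolding ratio_multiple_def mem_Collect_eq root_poly_def[symmetric]
    by (intro conjI bexI[where x = "\<lambda>z. root_poly qs z * k z"])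
qed

lemma C2_function_imp_continuous: "C2_function f \<Longrightarrow> continuous_on UNIV f"
  unfolding C2_function_def
  by (metis continuous_at_imp_continuous_on has_derivative_continuous)

theorem proposition1p11:
  fixes \<psi> :: "complex \<Rightarrow> real" and m M :: real and ps qs :: "complex list"
  assumes "C2_function \<psi>"
    and "m > 0" and "M > 0"
    and "\<forall>z. m \<le> laplacian \<psi> z \<and> laplacian \<psi> z \<le> M"
    and "length ps = length qs"
    and "distinct ps" and "distinct qs"
  shows "fock_vanishing \<psi> ps = ratio_multiple ps qs (fock_vanishing \<psi> qs)"
proof -
  have \<psi>: "continuous_on UNIV \<psi>"
    using assms(1) by (rule C2_function_imp_continuous)
  define K where
    "K = {k. k holomorphic_on UNIV \<and> (\<lambda>z. root_poly qs z * k z) \<in> fock_space \<psi>}"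
  have "{k. k holomorphic_on UNIV \<and> (\<lambda>z. root_poly ps z * k z) \<in> fock_space \<psi>} = K"
    unfolding K_def
    using root_poly_mult_mem_fock_space[OF \<psi> assms(5)]
      root_poly_mult_mem_fock_space[OF \<psi> assms(5)[symmetric]] by blast
  then have "fock_vanishing \<psi> ps = (\<lambda>k z. root_poly ps z * k z) ` K"
    using fock_vanishing_eq_root_poly_multiples[OF assms(6)] by simp
  also have "\<dots> = ratio_multiple ps qs ((\<lambda>k z. root_poly qs z * k z) ` K)"
    by (rule ratio_multiple_root_poly_multiples[symmetric]) (simp add: K_def)
  also have "(\<lambda>k z. root_poly qs z * k z) ` K = fock_vanishing \<psi> qs"
    unfolding K_def by (rule fock_vanishing_eq_root_poly_multiples[OF assms(7), symmetric])
  finally show ?thesis .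
qed

end
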